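(* Let $H$ be a Hilbert space and let $T$ be a densely defined closed operator on $H$ which is quasinormal and EP. Then $w(T^{n}) = (w(T))^{n}$ for all $n \in \mathbb{N}$.
   Context: For a densely defined closed operator $A$ from $D(A)\subset H$ into a Hilbert space $K$, $A^{*}$ is its adjoint, $N(A)$ its null space, $R(A)$ its range, and $C(A)=D(A)\cap N(A)^{\perp}$. When $R(A)$ is closed, the Moore–Penrose inverse $A^{\dagger}$ is the operator defined on $R(A)\oplus^{\perp}R(A)^{\perp}$ by $A^{\dagger}y=(A|_{C(A)})^{-1}y$ for $y\in R(A)$ and $A^{\dagger}y=0$ for $y\in R(A)^{\perp}$; it is bounded. The generalized Cauchy dual of $A$ is $w(A)=A(A^{*}A)^{\dagger}$ (products of unbounded operators taken on their natural domains). A densely defined closed operator $T$ on $H$ is EP if $R(T)$ is closed and $R(T)=R(T^{*})$. It is quasinormal if $T(T^{*}T)=(T^{*}T)T$ (equality of operators including domains). *)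

theory Defs
  imports "HOL-Analysis.Analysis"
begin

text \<open>Possibly unbounded linear operators from H to K are represented by their graphs,
  i.e. subsets of H \<times> K. Products of operators are taken on their natural domains,
  which is automatic for graph composition.\<close>

type_synonym ('a, 'b) lop = "('a \<times> 'b) set"

definition is_operator :: "('a::real_vector, 'b::real_vector) lop \<Rightarrow> bool" where
  "is_operator G \<longleftrightarrow> subspace G \<and> (\<forall>x y z. (x, y) \<in> G \<longrightarrow> (x, z) \<in> G \<longrightarrow> y = z)"

definition op_dom :: "('a, 'b) lop \<Rightarrow> 'a set" where
  "op_dom G = fst ` G"

definition op_range :: "('a, 'b) lop \<Rightarrow> 'b set" where
  "op_range G = snd ` G"

definition op_null :: "('a, 'b::zero) lop \<Rightarrow> 'a set" where
  "op_null G = {x. (x, 0) \<in> G}"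

definition densely_defined :: "('a::topological_space, 'b) lop \<Rightarrow> bool" where
  "densely_defined G \<longleftrightarrow> closure (op_dom G) = UNIV"

definition closed_operator :: "('a::real_normed_vector, 'b::real_normed_vector) lop \<Rightarrow> bool" where
  "closed_operator G \<longleftrightarrow> is_operator G \<and> closed G"

definition perp :: "'a::real_inner set \<Rightarrow> 'a set" where
  "perp S = {y. \<forall>x\<in>S. inner x y = 0}"

definition adj :: "('a::real_inner, 'b::real_inner) lop \<Rightarrow> ('b, 'a) lop" where
  "adj G = {(y, z). \<forall>(x, w)\<in>G. inner w y = inner x z}"

definition op_comp :: "('b, 'c) lop \<Rightarrow> ('a, 'b) lop \<Rightarrow> ('a, 'c) lop" where
  "op_comp B A = {(x, z). \<exists>y. (x, y) \<in> A \<and> (y, z) \<in> B}"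

definition id_op :: "('a, 'a) lop" where
  "id_op = {(x, x) | x. True}"

definition op_pow :: "('a, 'a) lop \<Rightarrow> nat \<Rightarrow> ('a, 'a) lop" where
  "op_pow T n = (op_comp T ^^ n) id_op"

definition mp_inv :: "('a::real_inner, 'b::real_inner) lop \<Rightarrow> ('b, 'a) lop" where
  "mp_inv A = {(y1 + y2, x) | x y1 y2.
      (x, y1) \<in> A \<and> x \<in> perp (op_null A) \<and> y2 \<in> perp (op_range A)}"

definition gen_cauchy_dual :: "('a::real_inner, 'b::real_inner) lop \<Rightarrow> ('a, 'b) lop" where
  "gen_cauchy_dual A = op_comp A (mp_inv (op_comp (adj A) A))"

definition is_EP :: "('a::real_inner, 'a) lop \<Rightarrow> bool" where
  "is_EP T \<longleftrightarrow> closed (op_range T) \<and> op_range T = op_range (adj T)"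

definition quasinormal :: "('a::real_inner, 'a) lop \<Rightarrow> bool" where
  "quasinormal T \<longleftrightarrow> op_comp T (op_comp (adj T) T) = op_comp (op_comp (adj T) T) T"

end

theory Submission
  imports Defs
begin

text \<open>Since R(T) = R(T*) =: M is closed and T is closed, N(T) = N(T*) = M\<bottom>, so T and T* both
  map M onto M and kill M\<bottom>; the same holds for T^n (n \<ge> 1). For such an operator A the
  generalized Cauchy dual is w(A) = (A* restricted to M)^-1 P, with P the orthogonal projection
  onto M. On M, (T^n)* agrees with (T*)^n and P is the identity, hence
  w(T^n) = ((T*|M)^n)^-1 P = ((T*|M)^-1 P)^n = w(T)^n.\<close>

section \<open>Orthogonal projection onto closed subspaces\<close>

lemma parallelogram_law:
  fixes a b :: "'a::real_inner"
  shows "(norm (a + b))\<^sup>2 + (norm (a - b))\<^sup>2 = 2 * (norm a)\<^sup>2 + 2 * (norm b)\<^sup>2"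
  by (simp add: power2_norm_eq_inner inner_add_left inner_add_right inner_diff_left
      inner_diff_right inner_commute)

lemma subspace_perp: "subspace (perp S)"
  unfolding perp_def subspace_def by (simp add: inner_add_right)

lemma perp_Int_self: "x \<in> S \<Longrightarrow> x \<in> perp S \<Longrightarrow> x = 0"
  unfolding perp_def by auto

lemma perp_antimono: "S \<subseteq> S' \<Longrightarrow> perp S' \<subseteq> perp S"
  unfolding perp_def by auto

lemma perp_if_dist_minimal:
  fixes x v :: "'a::real_inner"
  assumes "subspace V" "v \<in> V" and min: "\<And>w. w \<in> V \<Longrightarrow> norm (x - v) \<le> norm (x - w)"
  shows "x - v \<in> perp V"
  unfolding perp_def
proof (clarify)
  fix w assume w: "w \<in> V"
  define a where "a = inner w (x - v)"
  show "inner w (x - v) = 0"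
  proof (cases "w = 0")
    case False
    then have ww: "inner w w > 0" by simp
    define t where "t = a / inner w w"
    have "v + t *\<^sub>R w \<in> V" using assms w by (simp add: subspace_add subspace_scale)
    then have "(norm (x - v))\<^sup>2 \<le> (norm ((x - v) - t *\<^sub>R w))\<^sup>2"
      using min by (simp add: algebra_simps power_mono)
    also have "\<dots> = (norm (x - v))\<^sup>2 - 2 * t * a + t * t * inner w w"
      by (simp add: power2_norm_eq_inner inner_diff_left inner_diff_right a_def inner_commute
          algebra_simps)
    also have "\<dots> = (norm (x - v))\<^sup>2 - a * a / inner w w"
      using ww by (simp add: t_def field_simps)
    finally have "a * a \<le> 0" using ww by (simp add: divide_le_0_iff)
    then have "a = 0" using mult_le_0_iff[of a a] by linarith
    then show ?thesis by (simp add: a_def)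
  qed simp
qed

lemma Cauchy_if_norm_diff_sq_le:
  fixes v :: "nat \<Rightarrow> 'a::real_normed_vector"
  assumes bound: "\<And>m n. (norm (v m - v n))\<^sup>2 \<le> e m + e n" and "e \<longlonglongrightarrow> 0"
  shows "Cauchy v"
proof (rule metric_CauchyI)
  fix r :: real assume "r > 0"
  then have "\<forall>\<^sub>F n in sequentially. e n < r\<^sup>2 / 2"
    using \<open>e \<longlonglongrightarrow> 0\<close> by (intro order_tendstoD(2)) auto
  then obtain N where N: "\<And>n. n \<ge> N \<Longrightarrow> e n < r\<^sup>2 / 2"
    by (auto simp: eventually_sequentially)
  have "dist (v m) (v n) < r" if "m \<ge> N" "n \<ge> N" for m n
  proof -
    have "(norm (v m - v n))\<^sup>2 < r\<^sup>2" using bound[of m n] N[OF that(1)] N[OF that(2)] by linarith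
    then show ?thesis using \<open>r > 0\<close> by (simp add: dist_norm power_less_imp_less_base)
  qed
  then show "\<exists>N. \<forall>m\<ge>N. \<forall>n\<ge>N. dist (v m) (v n) < r" by blast
qed

lemma norm_diff_sq_le_if_near_minimal:
  fixes x a b :: "'a::real_inner"
  assumes "d \<le> (norm (x - (1/2) *\<^sub>R (a + b)))\<^sup>2"
    and "(norm (x - a))\<^sup>2 \<le> d + e" "(norm (x - b))\<^sup>2 \<le> d + f"
  shows "(norm (a - b))\<^sup>2 \<le> 2 * e + 2 * f"
proof -
  have "(x - a) + (x - b) = 2 *\<^sub>R (x - (1/2) *\<^sub>R (a + b))"
    by (simp add: algebra_simps scaleR_2)
  then have "4 * d \<le> (norm ((x - a) + (x - b)))\<^sup>2"
    using assms(1) by (simp add: power_mult_distrib)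
  then show ?thesis
    using parallelogram_law[of "x - a" "x - b"] assms(2,3) by (simp add: norm_minus_commute)
qed

lemma closed_subspace_nearest_point:
  fixes V :: "'a::{real_inner,complete_space} set"
  assumes "subspace V" "closed V"
  obtains l where "l \<in> V" "\<And>w. w \<in> V \<Longrightarrow> norm (x - l) \<le> norm (x - w)"
proof -
  define d where "d = (INF w\<in>V. (norm (x - w))\<^sup>2)"
  have bdd: "bdd_below ((\<lambda>w. (norm (x - w))\<^sup>2) ` V)" by (rule bdd_belowI[of _ 0]) auto
  have d_le: "d \<le> (norm (x - w))\<^sup>2" if "w \<in> V" for w
    unfolding d_def using bdd that by (rule cINF_lower)
  have "\<exists>w\<in>V. (norm (x - w))\<^sup>2 < d + 1 / real (Suc n)" for n
  proof -
    have "V \<noteq> {}" using subspace_0[OF assms(1)] by blast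
    moreover have "d < d + 1 / real (Suc n)" by simp
    ultimately show ?thesis using cINF_less_iff[OF _ bdd] unfolding d_def by blast
  qed
  then obtain v where v_in: "\<And>n. v n \<in> V"
    and v_near: "\<And>n. (norm (x - v n))\<^sup>2 < d + 1 / real (Suc n)"
    by metis
  have "(norm (v m - v n))\<^sup>2 \<le> 2 / real (Suc m) + 2 / real (Suc n)" for m n
  proof -
    have "(1/2) *\<^sub>R (v m + v n) \<in> V"
      using assms(1) v_in by (simp add: subspace_add subspace_scale)
    from norm_diff_sq_le_if_near_minimal[OF d_le[OF this]
        less_imp_le[OF v_near] less_imp_le[OF v_near]]
    show ?thesis by simp
  qed
  then have "Cauchy v"
    by (rule Cauchy_if_norm_diff_sq_le) (rule LIMSEQ_Suc[OF lim_const_over_n])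
  then obtain l where l: "v \<longlonglongrightarrow> l" using Cauchy_convergent_iff convergent_def by blast
  have "(norm (x - l))\<^sup>2 \<le> d"
  proof (rule LIMSEQ_le)
    show "(\<lambda>n. (norm (x - v n))\<^sup>2) \<longlonglongrightarrow> (norm (x - l))\<^sup>2" by (intro tendsto_intros l)
    show "(\<lambda>n. d + 1 / real (Suc n)) \<longlonglongrightarrow> d"
      using tendsto_add[OF tendsto_const LIMSEQ_Suc[OF lim_const_over_n]] by simp
  qed (use v_near less_imp_le in blast)
  then have "norm (x - l) \<le> norm (x - w)" if "w \<in> V" for w
    using d_le[OF that] by (simp add: power2_le_imp_le)
  moreover have "l \<in> V" using closed_sequentially[OF assms(2) v_in l] .
  ultimately show thesis using that by blast
qed

lemma closed_subspace_orth_decomp: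
  fixes V :: "'a::{real_inner,complete_space} set"
  assumes "subspace V" "closed V"
  shows "\<exists>v\<in>V. x - v \<in> perp V"
  using closed_subspace_nearest_point[OF assms] perp_if_dist_minimal[OF assms(1)] by metis

text \<open>For a subspace that is not closed the defining predicate may be unsatisfiable, and then
  the value is arbitrary.\<close>

definition orth_proj :: "'a::real_inner set \<Rightarrow> 'a \<Rightarrow> 'a" where
  "orth_proj V x = (SOME v. v \<in> V \<and> x - v \<in> perp V)"

lemma orth_proj:
  fixes V :: "'a::{real_inner,complete_space} set"
  assumes "subspace V" "closed V"
  shows orth_proj_in: "orth_proj V x \<in> V" and orth_proj_residual: "x - orth_proj V x \<in> perp V"
  using someI_ex[OF closed_subspace_orth_decomp[OF assms, of x, unfolded Bex_def]]
  unfolding orth_proj_def by auto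

lemma orth_proj_unique:
  assumes "subspace V" "v \<in> V" "x - v \<in> perp V"
  shows "orth_proj V x = v"
proof -
  have p: "orth_proj V x \<in> V \<and> x - orth_proj V x \<in> perp V"
    unfolding orth_proj_def using assms(2,3) by (metis (mono_tags, lifting) someI)
  have "v - orth_proj V x = (x - orth_proj V x) - (x - v)" by simp
  then have "v - orth_proj V x \<in> perp V" using p assms(3) subspace_perp by (metis subspace_diff)
  moreover have "v - orth_proj V x \<in> V" using p assms(1,2) by (simp add: subspace_diff)
  ultimately show ?thesis using perp_Int_self by fastforce
qed

lemma orth_proj_id: "subspace V \<Longrightarrow> v \<in> V \<Longrightarrow> orth_proj V v = v"
  by (rule orth_proj_unique) (auto simp: perp_def)

lemma orth_proj_add: "subspace V \<Longrightarrow> v \<in> V \<Longrightarrow> k \<in> perp V \<Longrightarrow> orth_proj V (v + k) = v"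
  by (rule orth_proj_unique) auto

lemma perp_perp:
  fixes V :: "'a::{real_inner,complete_space} set"
  assumes "subspace V" "closed V"
  shows "perp (perp V) = V"
proof
  show "V \<subseteq> perp (perp V)" unfolding perp_def by (auto simp: inner_commute)
next
  show "perp (perp V) \<subseteq> V"
  proof
    fix x assume x: "x \<in> perp (perp V)"
    define k where "k = x - orth_proj V x"
    have k: "k \<in> perp V" unfolding k_def using orth_proj_residual[OF assms] .
    have "inner k x = 0" using x k unfolding perp_def by auto
    moreover have "inner k (orth_proj V x) = 0"
      using k orth_proj_in[OF assms] unfolding perp_def by (auto simp: inner_commute)
    ultimately have "inner k k = 0" by (simp add: k_def inner_diff_right)
    then show "x \<in> V" using orth_proj_in[OF assms, of x] by (simp add: k_def)
  qed
qed

section \<open>Operators as graphs\<close>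

lemma op_comp_assoc: "op_comp C (op_comp B A) = op_comp (op_comp C B) A"
  unfolding op_comp_def by blast

lemma op_comp_id_op_right [simp]: "op_comp A id_op = A"
  and op_comp_id_op_left [simp]: "op_comp id_op A = A"
  unfolding op_comp_def id_op_def by auto

lemma op_pow_0 [simp]: "op_pow A 0 = id_op"
  by (simp add: op_pow_def)

lemma op_pow_Suc: "op_pow A (Suc n) = op_comp A (op_pow A n)"
  by (simp add: op_pow_def)

lemma op_pow_1 [simp]: "op_pow A (Suc 0) = A"
  by (simp add: op_pow_Suc)

lemma op_pow_Suc_right: "op_pow A (Suc n) = op_comp (op_pow A n) A"
  by (induction n) (simp_all add: op_pow_Suc op_comp_assoc)

lemma subspace_graphI:
  assumes "(0, 0) \<in> G"
    and "\<And>a b c d. (a, b) \<in> G \<Longrightarrow> (c, d) \<in> G \<Longrightarrow> (a + c, b + d) \<in> G"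
    and "\<And>r a b. (a, b) \<in> G \<Longrightarrow> (r *\<^sub>R a, r *\<^sub>R b) \<in> G"
  shows "subspace G"
  unfolding subspace_def using assms by (auto simp: zero_prod_def)

lemma subspace_graphD:
  assumes "subspace G"
  shows "(0, 0) \<in> G"
    and "(a, b) \<in> G \<Longrightarrow> (c, d) \<in> G \<Longrightarrow> (a + c, b + d) \<in> G"
    and "(a, b) \<in> G \<Longrightarrow> (c, d) \<in> G \<Longrightarrow> (a - c, b - d) \<in> G"
    and "(a, b) \<in> G \<Longrightarrow> (r *\<^sub>R a, r *\<^sub>R b) \<in> G"
  using subspace_0[OF assms] subspace_add[OF assms, of "(a, b)" "(c, d)"]
    subspace_diff[OF assms, of "(a, b)" "(c, d)"] subspace_scale[OF assms, of "(a, b)" r]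
  by (auto simp: zero_prod_def)

lemma subspace_op_comp:
  assumes "subspace A" "subspace B"
  shows "subspace (op_comp B A)"
proof (rule subspace_graphI)
  show "(0, 0) \<in> op_comp B A"
    unfolding op_comp_def using subspace_graphD(1)[OF assms(1)] subspace_graphD(1)[OF assms(2)]
    by blast
next
  fix a b c d assume "(a, b) \<in> op_comp B A" "(c, d) \<in> op_comp B A"
  then obtain u v where "(a, u) \<in> A" "(u, b) \<in> B" "(c, v) \<in> A" "(v, d) \<in> B"
    unfolding op_comp_def by blast
  then show "(a + c, b + d) \<in> op_comp B A"
    unfolding op_comp_def using subspace_graphD(2)[OF assms(1)] subspace_graphD(2)[OF assms(2)]
    by blast
next
  fix r a b assume "(a, b) \<in> op_comp B A"
  then obtain u where "(a, u) \<in> A" "(u, b) \<in> B" unfolding op_comp_def by blast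
  then show "(r *\<^sub>R a, r *\<^sub>R b) \<in> op_comp B A"
    unfolding op_comp_def using subspace_graphD(4)[OF assms(1)] subspace_graphD(4)[OF assms(2)]
    by blast
qed

lemma subspace_id_op: "subspace id_op"
  by (rule subspace_graphI) (auto simp: id_op_def)

lemma subspace_op_pow: "subspace A \<Longrightarrow> subspace (op_pow A n)"
  by (induction n) (simp_all add: op_pow_Suc subspace_id_op subspace_op_comp)

lemma subspace_adj: "subspace (adj A)"
  by (rule subspace_graphI) (auto simp: adj_def inner_add_right case_prod_beta)

lemma subspace_op_range:
  assumes "subspace A"
  shows "subspace (op_range A)"
  unfolding op_range_def
  by (rule linear_subspace_image[OF _ assms]) (simp add: linear_snd)

lemma is_operator_op_comp:
  assumes "is_operator A" "is_operator B"
  shows "is_operator (op_comp B A)"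
proof -
  have A: "subspace A" "\<And>x y z. (x, y) \<in> A \<Longrightarrow> (x, z) \<in> A \<Longrightarrow> y = z"
    using assms(1) unfolding is_operator_def by blast+
  have B: "subspace B" "\<And>x y z. (x, y) \<in> B \<Longrightarrow> (x, z) \<in> B \<Longrightarrow> y = z"
    using assms(2) unfolding is_operator_def by blast+
  have "y = z" if xy: "(x, y) \<in> op_comp B A" and xz: "(x, z) \<in> op_comp B A" for x y z
  proof -
    obtain u v where "(x, u) \<in> A" "(u, y) \<in> B" "(x, v) \<in> A" "(v, z) \<in> B"
      using xy xz unfolding op_comp_def by blast
    then show "y = z" using A(2) B(2) by blast
  qed
  then show ?thesis using subspace_op_comp[OF A(1) B(1)] unfolding is_operator_def by blast
qed

lemma is_operator_id_op: "is_operator id_op"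
  using subspace_id_op unfolding is_operator_def id_op_def by auto

lemma is_operator_op_pow: "is_operator A \<Longrightarrow> is_operator (op_pow A n)"
  by (induction n) (simp_all add: op_pow_Suc is_operator_id_op is_operator_op_comp)

lemma op_comp_mono: "A \<subseteq> A' \<Longrightarrow> B \<subseteq> B' \<Longrightarrow> op_comp B A \<subseteq> op_comp B' A'"
  unfolding op_comp_def by blast

lemma perp_UNIV: "perp (UNIV :: 'a::real_inner set) = {0}"
  unfolding perp_def by (auto intro: inner_eq_zero_iff[THEN iffD1])

lemma adj_id_op: "adj (id_op :: ('a::real_inner, 'a) lop) = id_op"
proof -
  have "y = z" if "\<forall>x. inner x y = inner x z" for y z :: 'a
  proof -
    have "inner (y - z) (y - z) = 0"
      using that[rule_format, of "y - z"] by (simp add: inner_diff_right)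
    then show ?thesis by simp
  qed
  then show ?thesis unfolding adj_def id_op_def by auto
qed

lemma mp_inv_id_op: "mp_inv (id_op :: ('a::real_inner, 'a) lop) = id_op"
proof -
  have range: "op_range (id_op :: ('a, 'a) lop) = UNIV" unfolding op_range_def id_op_def by force
  have null: "op_null (id_op :: ('a, 'a) lop) = {0}" unfolding op_null_def id_op_def by auto
  have perp_0: "perp {0 :: 'a} = UNIV" unfolding perp_def by auto
  show ?thesis unfolding mp_inv_def range null perp_UNIV perp_0 by (auto simp: id_op_def)
qed

lemma gen_cauchy_dual_id_op: "gen_cauchy_dual (id_op :: ('a::real_inner, 'a) lop) = id_op"
  by (simp add: gen_cauchy_dual_def adj_id_op mp_inv_id_op)

lemma adj_op_comp_supset: "op_comp (adj A) (adj B) \<subseteq> adj (op_comp B A)"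
proof
  fix p assume "p \<in> op_comp (adj A) (adj B)"
  then obtain y u z where p: "p = (y, z)" "(y, u) \<in> adj B" "(u, z) \<in> adj A"
    unfolding op_comp_def by blast
  have "inner w y = inner x z" if xw: "(x, w) \<in> op_comp B A" for x w
  proof -
    obtain v where "(x, v) \<in> A" "(v, w) \<in> B" using xw unfolding op_comp_def by blast
    then show ?thesis using p unfolding adj_def by fastforce
  qed
  then show "p \<in> adj (op_comp B A)" unfolding adj_def p by blast
qed

lemma op_pow_adj_subset: "op_pow (adj A) n \<subseteq> adj (op_pow A n)"
proof (induction n)
  case (Suc n)
  have "op_pow (adj A) (Suc n) \<subseteq> op_comp (adj (op_pow A n)) (adj A)"
    unfolding op_pow_Suc_right using Suc.IH by (rule op_comp_mono[OF order_refl])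
  also have "\<dots> \<subseteq> adj (op_pow A (Suc n))"
    unfolding op_pow_Suc by (rule adj_op_comp_supset)
  finally show ?case .
qed (simp add: adj_id_op)

lemma op_null_adj: "op_null (adj A) = perp (op_range A)"
  unfolding adj_def perp_def op_range_def op_null_def by auto

lemma op_range_adj_subset_perp_null: "op_range (adj A) \<subseteq> perp (op_null A)"
  unfolding adj_def perp_def op_range_def op_null_def by force

lemma op_null_closed_eq:
  fixes A :: "('a::{real_inner,complete_space}, 'b::{real_inner,complete_space}) lop"
  assumes "subspace A" "closed A"
  shows "op_null A = perp (op_range (adj A))"
proof
  show "op_null A \<subseteq> perp (op_range (adj A))"
    unfolding adj_def perp_def op_range_def op_null_def by (force simp: inner_commute)
next
  show "perp (op_range (adj A)) \<subseteq> op_null A"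
  proof
    fix x assume x: "x \<in> perp (op_range (adj A))"
    \<comment> \<open>The residual of projecting (x, 0) onto the graph is orthogonal to it, which makes
      its rotation (snd p, - fst p) a point of the graph of A*.\<close>
    define p where "p = (x, 0) - orth_proj A (x, 0)"
    have p: "p \<in> perp A" unfolding p_def using orth_proj_residual[OF assms] .
    have "inner w (snd p) = inner u (- fst p)" if "(u, w) \<in> A" for u w
    proof -
      have "inner (u, w) p = 0" using p that unfolding perp_def by blast
      then show ?thesis unfolding inner_prod_def inner_minus_right fst_conv snd_conv by linarith
    qed
    then have "(snd p, - fst p) \<in> adj A" unfolding adj_def by auto
    then have "inner (fst p) x = 0" using x unfolding perp_def op_range_def by force
    moreover have "inner p (orth_proj A (x, 0)) = 0"
      using p orth_proj_in[OF assms] unfolding perp_def by (auto simp: inner_commute)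
    ultimately have "inner p p = 0" by (simp add: p_def inner_diff_right inner_Pair_0)
    then show "x \<in> op_null A"
      using orth_proj_in[OF assms, of "(x, 0)"] by (simp add: p_def op_null_def)
  qed
qed

lemma graph_orth_proj_arg:
  fixes A :: "('a::{real_inner,complete_space}, 'b::real_vector) lop"
  assumes "subspace A" "subspace V" "closed V" "perp V \<subseteq> op_null A" "(u, v) \<in> A"
  shows "(orth_proj V u, v) \<in> A"
proof -
  have "(u - orth_proj V u, 0) \<in> A"
    using assms(4) orth_proj_residual[OF assms(2,3)] unfolding op_null_def by blast
  from subspace_graphD(3)[OF assms(1) assms(5) this] show ?thesis by simp
qed

lemma op_pow_onto:
  assumes "\<And>v. v \<in> V \<Longrightarrow> \<exists>u\<in>V. (u, v) \<in> A" "v \<in> V"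
  shows "\<exists>u\<in>V. (u, v) \<in> op_pow A n"
  using assms(2)
proof (induction n arbitrary: v)
  case (Suc n)
  then obtain w where "w \<in> V" "(w, v) \<in> A" using assms(1) by blast
  moreover obtain u where "u \<in> V" "(u, w) \<in> op_pow A n" using Suc.IH[OF \<open>w \<in> V\<close>] by blast
  ultimately show ?case unfolding op_pow_Suc op_comp_def by blast
qed (auto simp: id_op_def)

lemma op_null_adj_comp: "op_null (op_comp (adj A) A) = op_null A"
proof
  show "op_null (op_comp (adj A) A) \<subseteq> op_null A"
  proof
    fix x assume "x \<in> op_null (op_comp (adj A) A)"
    then obtain u where "(x, u) \<in> A" "(u, 0) \<in> adj A" unfolding op_null_def op_comp_def by blast
    moreover from this have "inner u u = 0" unfolding adj_def by fastforce
    ultimately show "x \<in> op_null A" unfolding op_null_def by simp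
  qed
qed (auto simp: op_null_def op_comp_def adj_def)

lemma op_range_adj_comp:
  fixes A :: "('a::real_inner, 'b::{real_inner,complete_space}) lop"
  assumes "subspace A" "closed (op_range A)"
  shows "op_range (op_comp (adj A) A) = op_range (adj A)"
proof
  show "op_range (op_comp (adj A) A) \<subseteq> op_range (adj A)"
    unfolding op_range_def op_comp_def by force
next
  show "op_range (adj A) \<subseteq> op_range (op_comp (adj A) A)"
  proof
    fix v assume "v \<in> op_range (adj A)"
    then obtain y where "(y, v) \<in> adj A" unfolding op_range_def by force
    then have "(orth_proj (op_range A) y, v) \<in> adj A"
      using subspace_op_range[OF assms(1)] assms(2) op_null_adj
      by (intro graph_orth_proj_arg[OF subspace_adj]) auto
    moreover obtain x where "(x, orth_proj (op_range A) y) \<in> A"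
      using orth_proj_in[OF subspace_op_range[OF assms(1)] assms(2)] unfolding op_range_def by force
    ultimately show "v \<in> op_range (op_comp (adj A) A)" unfolding op_range_def op_comp_def by force
  qed
qed

lemma mp_inv_adj_comp:
  fixes A :: "('a::{real_inner,complete_space}, 'b::{real_inner,complete_space}) lop"
  assumes "subspace A" "closed (op_range A)" "closed (op_range (adj A))"
    and "op_null A = perp (op_range (adj A))"
  shows "mp_inv (op_comp (adj A) A) = {(y1 + y2, x) | x y1 y2.
    (x, y1) \<in> op_comp (adj A) A \<and> x \<in> op_range (adj A) \<and> y2 \<in> perp (op_range (adj A))}"
  using op_null_adj_comp[of A] op_range_adj_comp[OF assms(1,2)] assms(4)
    perp_perp[OF subspace_op_range[OF subspace_adj] assms(3)]
  by (simp add: mp_inv_def)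

lemma gen_cauchy_dual_eq:
  fixes A :: "('a::{real_inner,complete_space}, 'b::{real_inner,complete_space}) lop"
  assumes op: "is_operator A" and "closed (op_range A)" "closed (op_range (adj A))"
    and null: "op_null A = perp (op_range (adj A))"
  shows "gen_cauchy_dual A =
    {(y, z). z \<in> op_range A \<and> (z, orth_proj (op_range (adj A)) y) \<in> adj A}"
proof -
  define W where "W = op_range (adj A)"
  define Q where "Q = op_comp (adj A) A"
  have A: "subspace A" "\<And>x y z. (x, y) \<in> A \<Longrightarrow> (x, z) \<in> A \<Longrightarrow> y = z"
    using op unfolding is_operator_def by blast+
  have W: "subspace W" "closed W"
    using subspace_op_range[OF subspace_adj] assms(3) by (simp_all add: W_def)
  have mp_inv_Q: "mp_inv Q = {(y1 + y2, x) | x y1 y2. (x, y1) \<in> Q \<and> x \<in> W \<and> y2 \<in> perp W}"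
    using mp_inv_adj_comp[OF A(1) assms(2-4)] by (simp add: Q_def W_def)
  have w_A: "gen_cauchy_dual A = op_comp A (mp_inv Q)" by (simp add: gen_cauchy_dual_def Q_def)
  have "gen_cauchy_dual A = {(y, z). z \<in> op_range A \<and> (z, orth_proj W y) \<in> adj A}"
  proof (intro equalityI subsetI)
    fix p assume "p \<in> gen_cauchy_dual A"
    then obtain y x u z y1 y2 where p: "p = (y, z)" "(x, z) \<in> A" "(x, u) \<in> A" "(u, y1) \<in> adj A"
      "x \<in> W" "y = y1 + y2" "y2 \<in> perp W"
      unfolding w_A mp_inv_Q by (auto simp: Q_def op_comp_def)
    moreover have "u = z" using A(2) p(2,3) by blast
    moreover have "orth_proj W y = y1"
      using p(4,6,7) orth_proj_add[OF W(1)] unfolding W_def op_range_def by force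
    ultimately show "p \<in> {(y, z). z \<in> op_range A \<and> (z, orth_proj W y) \<in> adj A}"
      unfolding op_range_def by force
  next
    fix p assume "p \<in> {(y, z). z \<in> op_range A \<and> (z, orth_proj W y) \<in> adj A}"
    then obtain y z x where p: "p = (y, z)" "(x, z) \<in> A" "(z, orth_proj W y) \<in> adj A"
      unfolding op_range_def by force
    have x: "(orth_proj W x, z) \<in> A"
      using graph_orth_proj_arg[OF A(1) W _ p(2)] null by (simp add: W_def)
    then have "(orth_proj W x, orth_proj W y) \<in> Q" using p(3) unfolding Q_def op_comp_def by blast
    then have "(orth_proj W y + (y - orth_proj W y), orth_proj W x) \<in> mp_inv Q"
      unfolding mp_inv_Q using orth_proj_in[OF W] orth_proj_residual[OF W] by blast
    then show "p \<in> gen_cauchy_dual A" using x p(1) unfolding w_A op_comp_def by auto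
  qed
  then show ?thesis by (simp add: W_def)
qed

section \<open>Closed EP operators\<close>

locale EP_operator =
  fixes T :: "('a::{real_inner,complete_space}, 'a) lop"
  assumes closed_operator: "closed_operator T" and EP: "is_EP T"
begin

abbreviation M :: "'a set" where "M \<equiv> op_range T"

lemma is_operator_T: "is_operator T"
  using closed_operator unfolding closed_operator_def by blast

lemma subspace_T: "subspace T"
  using is_operator_T unfolding is_operator_def by blast

lemma subspace_M: "subspace M"
  using subspace_op_range[OF subspace_T] .

lemma closed_M: "closed M"
  using EP unfolding is_EP_def by blast

lemma op_range_adj: "op_range (adj T) = M"
  using EP unfolding is_EP_def by simp

lemma op_null_T: "op_null T = perp M"
  using op_null_closed_eq[OF subspace_T] closed_operator op_range_adj
  unfolding closed_operator_def by simp

lemma onto_M: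
  assumes "v \<in> M" shows "\<exists>u\<in>M. (u, v) \<in> T"
proof -
  obtain u where "(u, v) \<in> T" using assms unfolding op_range_def by force
  then have "(orth_proj M u, v) \<in> T"
    using graph_orth_proj_arg[OF subspace_T subspace_M closed_M] op_null_T by blast
  then show ?thesis using orth_proj_in[OF subspace_M closed_M] by blast
qed

lemma adj_onto_M:
  assumes "v \<in> M" shows "\<exists>u\<in>M. (u, v) \<in> adj T"
proof -
  obtain u where "(u, v) \<in> adj T" using assms op_range_adj unfolding op_range_def by force
  then have "(orth_proj M u, v) \<in> adj T"
    using graph_orth_proj_arg[OF subspace_adj subspace_M closed_M] op_null_adj[of T] by blast
  then show ?thesis using orth_proj_in[OF subspace_M closed_M] by blast
qed

lemma M_subset_op_range_op_pow: "M \<subseteq> op_range (op_pow T n)"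
  using op_pow_onto[OF onto_M] unfolding op_range_def by force

lemma op_range_op_pow: "op_range (op_pow T (Suc n)) = M"
proof
  show "op_range (op_pow T (Suc n)) \<subseteq> M" unfolding op_pow_Suc op_range_def op_comp_def by force
qed (rule M_subset_op_range_op_pow)

lemma op_null_op_pow: "op_null (op_pow T (Suc n)) = perp M"
proof (induction n)
  case (Suc n)
  show ?case
  proof
    show "op_null (op_pow T (Suc (Suc n))) \<subseteq> perp M"
    proof
      fix x assume "x \<in> op_null (op_pow T (Suc (Suc n)))"
      then obtain u where u: "(x, u) \<in> T" "(u, 0) \<in> op_pow T (Suc n)"
        unfolding op_null_def op_pow_Suc_right[of T "Suc n"] op_comp_def by blast
      have "u \<in> M" using u(1) unfolding op_range_def by force
      moreover have "u \<in> perp M" using u(2) Suc.IH unfolding op_null_def by blast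
      ultimately have "u = 0" by (rule perp_Int_self)
      then show "x \<in> perp M" using u(1) op_null_T unfolding op_null_def by blast
    qed
  next
    show "perp M \<subseteq> op_null (op_pow T (Suc (Suc n)))"
      using op_null_T subspace_graphD(1)[OF subspace_op_pow[OF subspace_T, of "Suc n"]]
      unfolding op_null_def op_pow_Suc_right[of T "Suc n"] op_comp_def by blast
  qed
qed (simp add: op_null_T)

lemma op_range_adj_op_pow: "op_range (adj (op_pow T (Suc n))) = M"
proof
  have "op_range (adj (op_pow T (Suc n))) \<subseteq> perp (perp M)"
    using op_range_adj_subset_perp_null op_null_op_pow by metis
  then show "op_range (adj (op_pow T (Suc n))) \<subseteq> M"
    using perp_perp[OF subspace_M closed_M] by simp
next
  show "M \<subseteq> op_range (adj (op_pow T (Suc n)))"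
    using op_pow_onto[OF adj_onto_M] op_pow_adj_subset unfolding op_range_def by force
qed

lemma adj_op_pow_on_M:
  assumes "z \<in> M" "v \<in> M"
  shows "(z, v) \<in> adj (op_pow T n) \<longleftrightarrow> (z, v) \<in> op_pow (adj T) n"
proof
  assume zv: "(z, v) \<in> adj (op_pow T n)"
  obtain z' where z': "z' \<in> M" "(z', v) \<in> op_pow (adj T) n"
    using op_pow_onto[OF adj_onto_M assms(2)] by blast
  then have "(z', v) \<in> adj (op_pow T n)" using op_pow_adj_subset by blast
  then have "(z - z', 0) \<in> adj (op_pow T n)"
    using subspace_graphD(3)[OF subspace_adj zv] by force
  then have "z - z' \<in> perp M"
    using op_null_adj perp_antimono[OF M_subset_op_range_op_pow] unfolding op_null_def by blast
  moreover have "z - z' \<in> M" using assms(1) z'(1) subspace_M by (simp add: subspace_diff)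
  ultimately have "z = z'" using perp_Int_self by fastforce
  then show "(z, v) \<in> op_pow (adj T) n" using z' by simp
qed (use op_pow_adj_subset in blast)

lemma gen_cauchy_dual_op_pow:
  "gen_cauchy_dual (op_pow T (Suc n)) =
    {(y, z). z \<in> M \<and> (z, orth_proj M y) \<in> op_pow (adj T) (Suc n)}"
proof -
  have "gen_cauchy_dual (op_pow T (Suc n)) =
      {(y, z). z \<in> M \<and> (z, orth_proj M y) \<in> adj (op_pow T (Suc n))}"
    using gen_cauchy_dual_eq[OF is_operator_op_pow[OF is_operator_T]] closed_M
      op_range_op_pow op_range_adj_op_pow op_null_op_pow by simp
  then show ?thesis using adj_op_pow_on_M orth_proj_in[OF subspace_M closed_M] by blast
qed

lemma op_pow_gen_cauchy_dual:
  "op_pow (gen_cauchy_dual T) (Suc n) =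
    {(y, z). z \<in> M \<and> (z, orth_proj M y) \<in> op_pow (adj T) (Suc n)}"
proof (induction n)
  case 0
  show ?case using gen_cauchy_dual_op_pow[of 0] by simp
next
  case (Suc n)
  have w: "(u, z) \<in> gen_cauchy_dual T \<longleftrightarrow> z \<in> M \<and> (z, u) \<in> adj T" if "u \<in> M" for u z
    using gen_cauchy_dual_op_pow[of 0] orth_proj_id[OF subspace_M that] by simp
  have "op_pow (gen_cauchy_dual T) (Suc (Suc n)) =
      op_comp (gen_cauchy_dual T) (op_pow (gen_cauchy_dual T) (Suc n))"
    by (rule op_pow_Suc)
  also have "\<dots> = {(y, z). z \<in> M \<and>
      (\<exists>u\<in>M. (z, u) \<in> adj T \<and> (u, orth_proj M y) \<in> op_pow (adj T) (Suc n))}"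
    unfolding Suc.IH op_comp_def using w by blast
  also have "\<dots> = {(y, z). z \<in> M \<and> (z, orth_proj M y) \<in> op_pow (adj T) (Suc (Suc n))}"
  proof -
    have "u \<in> M" if "(z, u) \<in> adj T" for z u
      using that op_range_adj unfolding op_range_def by force
    then show ?thesis unfolding op_pow_Suc_right[of "adj T" "Suc n"] op_comp_def by blast
  qed
  finally show ?case .
qed

theorem gen_cauchy_dual_op_pow_eq: "gen_cauchy_dual (op_pow T n) = op_pow (gen_cauchy_dual T) n"
  by (cases n) (simp_all add: gen_cauchy_dual_id_op gen_cauchy_dual_op_pow op_pow_gen_cauchy_dual)

end

theorem theorem2p18:
  fixes T :: "('a::{real_inner, complete_space}, 'a) lop"
  assumes "closed_operator T" and "densely_defined T"
    and "quasinormal T" and "is_EP T"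
  shows "gen_cauchy_dual (op_pow T n) = op_pow (gen_cauchy_dual T) n"
proof -
  interpret EP_operator T using assms(1,4) by unfold_locales
  show ?thesis by (rule gen_cauchy_dual_op_pow_eq)
qed

end
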